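(* Let $R$ be a commutative ring, let $\mathfrak{m}_1,\ldots,\mathfrak{m}_d$ be finitely many distinct maximal ideals of $R$, let $c_1,\ldots,c_d\geq 1$ be integers and $I=\bigcap_{i=1}^d \mathfrak{m}_i^{c_i}$. Then $R/I$ is a GPP-ring.
   Context: A commutative ring $A$ is a GPP-ring (generalized p.p. ring) if for each $f\in A$ there exists an integer $n\geq 1$ such that the ideal $Af^n$ is a projective $A$-module. *)

theory Defs
  imports "HOL-Algebra.Algebra"
begin

text \<open>Elements of the free R-module on the set carrier M: finitely supported
  functions from carrier M to carrier R (zero outside carrier M).\<close>
definition free_on_carrier ::
  "('a, 'c) ring_scheme \<Rightarrow> ('a, 'b, 'd) module_scheme \<Rightarrow> ('b \<Rightarrow> 'a) set" where
  "free_on_carrier R M =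
     {\<phi>. (\<forall>z. \<phi> z \<in> carrier R) \<and> (\<forall>z. z \<notin> carrier M \<longrightarrow> \<phi> z = \<zero>\<^bsub>R\<^esub>)
          \<and> finite {z. \<phi> z \<noteq> \<zero>\<^bsub>R\<^esub>}}"

text \<open>M is a projective R-module: M is a direct summand of a free module, namely
  the canonical surjection from the free module on carrier M onto M,
  phi maps to the sum of phi z times z, has an R-linear section s.\<close>
definition projective_module ::
  "('a, 'c) ring_scheme \<Rightarrow> ('a, 'b, 'd) module_scheme \<Rightarrow> bool" where
  "projective_module R M \<longleftrightarrow> module R M \<and>
     (\<exists>s. (\<forall>x\<in>carrier M. s x \<in> free_on_carrier R M)
        \<and> (\<forall>x\<in>carrier M. \<forall>y\<in>carrier M.
              s (x \<oplus>\<^bsub>M\<^esub> y) = (\<lambda>z. s x z \<oplus>\<^bsub>R\<^esub> s y z))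
        \<and> (\<forall>a\<in>carrier R. \<forall>x\<in>carrier M.
              s (a \<odot>\<^bsub>M\<^esub> x) = (\<lambda>z. a \<otimes>\<^bsub>R\<^esub> s x z))
        \<and> (\<forall>x\<in>carrier M.
              finsum M (\<lambda>z. s x z \<odot>\<^bsub>M\<^esub> z) {z \<in> carrier M. s x z \<noteq> \<zero>\<^bsub>R\<^esub>} = x))"

definition ideal_module :: "('a, 'c) ring_scheme \<Rightarrow> 'a set \<Rightarrow> ('a, 'a) module" where
  "ideal_module A J = \<lparr>carrier = J, monoid.mult = monoid.mult A, monoid.one = monoid.one A,
     ring.zero = ring.zero A, ring.add = ring.add A, module.smult = monoid.mult A\<rparr>"

definition GPP_ring :: "('a, 'c) ring_scheme \<Rightarrow> bool" where
  "GPP_ring A \<longleftrightarrow> cring A \<and>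
     (\<forall>f\<in>carrier A. \<exists>n::nat. n \<ge> 1 \<and>
        projective_module A (ideal_module A (PIdl\<^bsub>A\<^esub> (f [^]\<^bsub>A\<^esub> n))))"

definition ideal_pow :: "('a, 'c) ring_scheme \<Rightarrow> 'a set \<Rightarrow> nat \<Rightarrow> 'a set" where
  "ideal_pow R I k = I [^]\<^bsub>ideals_set R\<^esub> k"

end

theory Submission
  imports Defs
begin

text \<open>Call a von Neumann regular modulo J if a (1 - a w) \<in> J for some w. Modulo a
  power P^c of a maximal ideal every power r^n with n \<ge> c is regular: either r \<in> P and
  r^n \<in> P^c, or r^n is invertible modulo P, say 1 - r^n y \<in> P, and then
  (1 - r^n y)^c \<in> P^c has the form 1 - r^n z. Regularity modulo finitely many ideals
  passes to their intersection, since a (1 - a w) (1 - a w') = a (1 - a (w + w' - a w w')).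
  So in R/I the element g = f^n, n \<ge> max c_i, satisfies g = w g^2; then e = w g is an
  idempotent generator of the ideal A g, which is therefore a direct summand of A.\<close>

lemma ideal_pow_0 [simp]: "ideal_pow R I 0 = carrier R"
  by (simp add: ideal_pow_def ideals_set_def)

lemma ideal_pow_Suc [simp]: "ideal_pow R I (Suc k) = ideal_prod R (ideal_pow R I k) I"
  by (simp add: ideal_pow_def ideals_set_def)

lemma (in ring) ideal_ideal_pow: "ideal I R \<Longrightarrow> ideal (ideal_pow R I k) R"
  by (induct k) (simp_all add: oneideal ideal_prod_is_ideal)

lemma (in ring) nat_pow_in_ideal_pow: "ideal I R \<Longrightarrow> x \<in> I \<Longrightarrow> x [^] k \<in> ideal_pow R I k"
  by (induct k) (auto intro: ideal_prod.prod)

lemma (in ring) ideal_carrier_Int_INTER: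
  assumes "\<And>i. i \<in> S \<Longrightarrow> ideal (J i) R"
  shows "ideal (carrier R \<inter> (\<Inter>i\<in>S. J i)) R"
proof -
  have "carrier R \<inter> (\<Inter>i\<in>S. J i) = \<Inter>(insert (carrier R) (J ` S))"
    by simp
  moreover have "ideal (\<Inter>(insert (carrier R) (J ` S))) R"
    using assms oneideal by (intro i_Intersect) auto
  ultimately show ?thesis
    by simp
qed

lemma (in primeideal) nat_pow_notin:
  assumes "a \<in> carrier R" "a \<notin> I"
  shows "a [^] (n::nat) \<notin> I"
proof (induct n)
  case 0
  show ?case
    using I_notcarr one_imp_carrier by auto
next
  case (Suc n)
  then show ?case
    using assms I_prime[of "a [^] n" a] by auto
qed

lemma (in cring) maximalideal_inverse_mod:
  assumes P: "maximalideal P R" and a: "a \<in> carrier R" "a \<notin> P"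
  shows "\<exists>y\<in>carrier R. \<one> \<ominus> a \<otimes> y \<in> P"
proof -
  interpret P: maximalideal P R by (rule P)
  interpret Ra: ideal "PIdl a" R by (rule cgenideal_ideal[OF a(1)])
  interpret sum: ideal "P <+>\<^bsub>R\<^esub> PIdl a" R
    by (rule add_ideals[OF P.is_ideal Ra.is_ideal])
  have "P \<subseteq> P <+>\<^bsub>R\<^esub> PIdl a"
  proof
    fix x assume x: "x \<in> P"
    then have "x = x \<oplus> \<zero>"
      using P.Icarr[OF x] by simp
    then show "x \<in> P <+>\<^bsub>R\<^esub> PIdl a"
      using x Ra.zero_closed unfolding set_add_def' by blast
  qed
  moreover have "a \<in> P <+>\<^bsub>R\<^esub> PIdl a"
  proof -
    have "a = \<zero> \<oplus> a"
      using a(1) by simp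
    then show ?thesis
      using cgenideal_self[OF a(1)] P.zero_closed unfolding set_add_def' by blast
  qed
  ultimately have "P <+>\<^bsub>R\<^esub> PIdl a = carrier R"
    using P.I_maximal[OF sum.is_ideal] sum.a_subset a(2) by auto
  then obtain p y where p: "p \<in> P" and y: "y \<in> carrier R" and one: "\<one> = p \<oplus> y \<otimes> a"
    using one_closed unfolding set_add_def' cgenideal_def by blast
  have "\<one> \<ominus> a \<otimes> y = p"
    using one P.Icarr[OF p] y a(1) by algebra
  then show ?thesis
    using p y by blast
qed

lemma (in cring) one_minus_mult_pow:
  assumes "a \<in> carrier R" "y \<in> carrier R"
  shows "\<exists>z\<in>carrier R. (\<one> \<ominus> a \<otimes> y) [^] (k::nat) = \<one> \<ominus> a \<otimes> z"
proof (induct k)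
  case 0
  show ?case
    using assms by (intro bexI[of _ \<zero>]) (simp_all add: a_minus_def)
next
  case (Suc k)
  then obtain z where z: "z \<in> carrier R" "(\<one> \<ominus> a \<otimes> y) [^] k = \<one> \<ominus> a \<otimes> z"
    by blast
  have "(\<one> \<ominus> a \<otimes> y) [^] Suc k = (\<one> \<ominus> a \<otimes> z) \<otimes> (\<one> \<ominus> a \<otimes> y)"
    using z(2) by simp
  also have "\<dots> = \<one> \<ominus> a \<otimes> (z \<oplus> y \<ominus> a \<otimes> z \<otimes> y)"
    using z(1) assms by algebra
  finally show ?case
    using z(1) assms by blast
qed

lemma (in cring) nat_pow_regular_mod_maximalideal_pow:
  assumes P: "maximalideal P R" and r: "r \<in> carrier R" and "c \<le> n"
  shows "\<exists>w\<in>carrier R. r [^] n \<otimes> (\<one> \<ominus> r [^] n \<otimes> w) \<in> ideal_pow R P c"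
proof -
  interpret P: maximalideal P R by (rule P)
  interpret Pc: ideal "ideal_pow R P c" R by (rule ideal_ideal_pow[OF P.is_ideal])
  have rn: "r [^] n \<in> carrier R"
    using r by simp
  show ?thesis
  proof (cases "r \<in> P")
    case True
    have "r [^] n = r [^] (n - c) \<otimes> r [^] c"
      using r \<open>c \<le> n\<close> by (simp add: nat_pow_mult)
    then have "r [^] n \<in> ideal_pow R P c"
      using nat_pow_in_ideal_pow[OF P.is_ideal True] r by (simp add: Pc.I_l_closed)
    then show ?thesis
      using rn by (intro bexI[of _ \<zero>]) (simp_all add: Pc.I_r_closed a_minus_def)
  next
    case False
    then have "r [^] n \<notin> P"
      using primeideal.nat_pow_notin[OF maximalideal_prime[OF P] r] by blast
    then obtain y where y: "y \<in> carrier R" "\<one> \<ominus> r [^] n \<otimes> y \<in> P"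
      using maximalideal_inverse_mod[OF P rn] by blast
    obtain z where z: "z \<in> carrier R" "(\<one> \<ominus> r [^] n \<otimes> y) [^] c = \<one> \<ominus> r [^] n \<otimes> z"
      using one_minus_mult_pow[OF rn y(1)] by blast
    have "\<one> \<ominus> r [^] n \<otimes> z \<in> ideal_pow R P c"
      using nat_pow_in_ideal_pow[OF P.is_ideal y(2), of c] unfolding z(2) .
    then show ?thesis
      using rn z(1) by (blast intro: Pc.I_l_closed)
  qed
qed

lemma (in cring) regular_mod_Int:
  assumes "ideal J R" "ideal K R" and a: "a \<in> carrier R"
    and w: "w \<in> carrier R" "a \<otimes> (\<one> \<ominus> a \<otimes> w) \<in> J"
    and w': "w' \<in> carrier R" "a \<otimes> (\<one> \<ominus> a \<otimes> w') \<in> K"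
  shows "\<exists>w''\<in>carrier R. a \<otimes> (\<one> \<ominus> a \<otimes> w'') \<in> J \<inter> K"
proof
  let ?w'' = "w \<oplus> w' \<ominus> a \<otimes> w \<otimes> w'"
  have "a \<otimes> (\<one> \<ominus> a \<otimes> ?w'') = (a \<otimes> (\<one> \<ominus> a \<otimes> w)) \<otimes> (\<one> \<ominus> a \<otimes> w')"
    using a w(1) w'(1) by algebra
  then have in_J: "a \<otimes> (\<one> \<ominus> a \<otimes> ?w'') \<in> J"
    using ideal.I_r_closed[OF assms(1) w(2)] a w'(1) by simp
  have "a \<otimes> (\<one> \<ominus> a \<otimes> ?w'') = (\<one> \<ominus> a \<otimes> w) \<otimes> (a \<otimes> (\<one> \<ominus> a \<otimes> w'))"
    using a w(1) w'(1) by algebra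
  then have "a \<otimes> (\<one> \<ominus> a \<otimes> ?w'') \<in> K"
    using ideal.I_l_closed[OF assms(2) w'(2)] a w(1) by simp
  with in_J show "a \<otimes> (\<one> \<ominus> a \<otimes> ?w'') \<in> J \<inter> K"
    by blast
  show "?w'' \<in> carrier R"
    using a w(1) w'(1) by simp
qed

lemma (in cring) regular_mod_INTER:
  assumes "finite S" and "\<And>i. i \<in> S \<Longrightarrow> ideal (J i) R" and a: "a \<in> carrier R"
    and "\<And>i. i \<in> S \<Longrightarrow> \<exists>w\<in>carrier R. a \<otimes> (\<one> \<ominus> a \<otimes> w) \<in> J i"
  shows "\<exists>w\<in>carrier R. a \<otimes> (\<one> \<ominus> a \<otimes> w) \<in> carrier R \<inter> (\<Inter>i\<in>S. J i)"
  using assms(1,2,4)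
proof (induct S rule: finite_induct)
  case empty
  show ?case
    using a by (intro bexI[of _ \<zero>]) simp_all
next
  case (insert i S)
  obtain w where w: "w \<in> carrier R" "a \<otimes> (\<one> \<ominus> a \<otimes> w) \<in> J i"
    using insert.prems(2) by blast
  obtain w' where w': "w' \<in> carrier R" "a \<otimes> (\<one> \<ominus> a \<otimes> w') \<in> carrier R \<inter> (\<Inter>i\<in>S. J i)"
    using insert.hyps(3) insert.prems by blast
  have "ideal (J i) R"
    using insert.prems(1) by blast
  moreover have "ideal (carrier R \<inter> (\<Inter>i\<in>S. J i)) R"
    using insert.prems(1) by (intro ideal_carrier_Int_INTER) blast
  ultimately obtain w'' where "w'' \<in> carrier R"
    "a \<otimes> (\<one> \<ominus> a \<otimes> w'') \<in> J i \<inter> (carrier R \<inter> (\<Inter>i\<in>S. J i))"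
    using regular_mod_Int[OF _ _ a w w'] by blast
  then show ?case
    by blast
qed

lemma (in ideal) rcos_regular:
  assumes "cring R" and a: "a \<in> carrier R" and w: "w \<in> carrier R"
    and "a \<otimes> (\<one> \<ominus> a \<otimes> w) \<in> I"
  shows "I +> a = ((I +> w) \<otimes>\<^bsub>R Quot I\<^esub> (I +> a)) \<otimes>\<^bsub>R Quot I\<^esub> (I +> a)"
proof -
  interpret cring R by fact
  have "a \<otimes> (\<one> \<ominus> a \<otimes> w) = a \<ominus> (w \<otimes> a) \<otimes> a"
    using a w by algebra
  then have "a \<ominus> (w \<otimes> a) \<otimes> a \<in> I"
    using assms(4) by simp
  then have "I +> a = I +> ((w \<otimes> a) \<otimes> a)"
    using quotient_eq_iff_same_a_r_cos[OF is_ideal a] a w by simp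
  also have "\<dots> = ((I +> w) \<otimes>\<^bsub>R Quot I\<^esub> (I +> a)) \<otimes>\<^bsub>R Quot I\<^esub> (I +> a)"
    using ring_hom_mult[OF rcos_ring_hom] a w by simp
  finally show ?thesis .
qed

lemma ideal_module_simps [simp]:
  "carrier (ideal_module A J) = J"
  "x \<oplus>\<^bsub>ideal_module A J\<^esub> y = x \<oplus>\<^bsub>A\<^esub> y"
  "\<zero>\<^bsub>ideal_module A J\<^esub> = \<zero>\<^bsub>A\<^esub>"
  "a \<odot>\<^bsub>ideal_module A J\<^esub> x = a \<otimes>\<^bsub>A\<^esub> x"
  by (simp_all add: ideal_module_def)

lemma (in cring) module_ideal_module:
  assumes "ideal J R"
  shows "module R (ideal_module R J)"
proof -
  interpret J: ideal J R by fact
  have "abelian_group (ideal_module R J)"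
  proof (rule abelian_groupI)
    fix x assume "x \<in> carrier (ideal_module R J)"
    then show "\<exists>y\<in>carrier (ideal_module R J). y \<oplus>\<^bsub>ideal_module R J\<^esub> x = \<zero>\<^bsub>ideal_module R J\<^esub>"
      by (intro bexI[of _ "\<ominus> x"]) (simp_all add: J.Icarr l_neg)
  qed (auto simp: J.a_closed J.Icarr a_ac)
  then show ?thesis
    by (rule moduleI[OF is_cring]) (auto simp: J.I_l_closed J.Icarr l_distr r_distr m_assoc)
qed

lemma (in cring) projective_ideal_module:
  assumes J: "ideal J R" and e: "e \<in> J" and unit: "\<And>x. x \<in> J \<Longrightarrow> x \<otimes> e = x"
  shows "projective_module R (ideal_module R J)"
proof -
  interpret J: ideal J R by (rule J)
  interpret M: abelian_group "ideal_module R J"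
    using module_ideal_module[OF J] by (rule module.axioms(2))
  define s where "s = (\<lambda>x z. if z = e then x else \<zero>)"
  have support: "{z \<in> J. s x z \<noteq> \<zero>} = (if x = \<zero> then {} else {e})" for x
    using e by (auto simp: s_def)
  show ?thesis
    unfolding projective_module_def
  proof (intro conjI exI[of _ s] ballI module_ideal_module[OF J])
    fix x assume x: "x \<in> carrier (ideal_module R J)"
    have "finite {z. s x z \<noteq> \<zero>}"
      by (rule finite_subset[of _ "{e}"]) (auto simp: s_def)
    then show "s x \<in> free_on_carrier R (ideal_module R J)"
      using x e by (auto simp: free_on_carrier_def s_def J.Icarr)
  next
    fix x y
    show "s (x \<oplus>\<^bsub>ideal_module R J\<^esub> y) = (\<lambda>z. s x z \<oplus> s y z)"
      by (auto simp: s_def)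
  next
    fix a x assume "a \<in> carrier R" "x \<in> carrier (ideal_module R J)"
    then show "s (a \<odot>\<^bsub>ideal_module R J\<^esub> x) = (\<lambda>z. a \<otimes> s x z)"
      by (auto simp: s_def)
  next
    fix x assume x: "x \<in> carrier (ideal_module R J)"
    show "finsum (ideal_module R J) (\<lambda>z. s x z \<odot>\<^bsub>ideal_module R J\<^esub> z)
        {z \<in> carrier (ideal_module R J). s x z \<noteq> \<zero>} = x"
    proof (cases "x = \<zero>")
      case True
      have "{z \<in> carrier (ideal_module R J). s x z \<noteq> \<zero>} = {}"
        using support[of x] True by simp
      then show ?thesis
        using True by (simp only: M.finsum_empty ideal_module_simps)
    next
      case False
      have "s x e \<odot>\<^bsub>ideal_module R J\<^esub> e = x"
        using x unit by (simp add: s_def)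
      moreover have "{z \<in> carrier (ideal_module R J). s x z \<noteq> \<zero>} = {e}"
        using support[of x] False by simp
      ultimately show ?thesis
        using e x by (simp add: s_def)
    qed
  qed
qed

lemma (in cring) projective_PIdl_regular:
  assumes g: "g \<in> carrier R" and w: "w \<in> carrier R" and regular: "g = (w \<otimes> g) \<otimes> g"
  shows "projective_module R (ideal_module R (PIdl g))"
proof (rule projective_ideal_module[OF cgenideal_ideal[OF g]])
  show "w \<otimes> g \<in> PIdl g"
    using w unfolding cgenideal_def by blast
next
  fix x assume "x \<in> PIdl g"
  then obtain u where u: "u \<in> carrier R" "x = u \<otimes> g"
    unfolding cgenideal_def by blast
  have "x \<otimes> (w \<otimes> g) = u \<otimes> ((w \<otimes> g) \<otimes> g)"
    using u g w by algebra
  then show "x \<otimes> (w \<otimes> g) = x"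
    using u(2) regular by simp
qed

lemma (in ideal) GPP_ring_Quot:
  assumes "cring R"
    and regular: "\<And>r. r \<in> carrier R \<Longrightarrow>
      \<exists>n::nat\<ge>1. \<exists>w\<in>carrier R. r [^] n \<otimes> (\<one> \<ominus> r [^] n \<otimes> w) \<in> I"
  shows "GPP_ring (R Quot I)"
  unfolding GPP_ring_def
proof (intro conjI ballI)
  interpret cring R by fact
  show quot: "cring (R Quot I)"
    by (rule quotient_is_cring[OF is_cring])
  fix f assume f: "f \<in> carrier (R Quot I)"
  then obtain r where r: "r \<in> carrier R" "f = I +> r"
    by (auto simp: FactRing_def A_RCOSETS_def')
  then obtain n :: nat and w where n: "n \<ge> 1"
    and w: "w \<in> carrier R" "r [^] n \<otimes> (\<one> \<ominus> r [^] n \<otimes> w) \<in> I"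
    using regular[OF r(1)] by blast
  have fn: "f [^]\<^bsub>R Quot I\<^esub> n = I +> r [^] n"
    using ring_hom_ring.hom_nat_pow[OF rcos_ring_hom_ring r(1)] r(2) by simp
  have regular_fn: "f [^]\<^bsub>R Quot I\<^esub> n
      = ((I +> w) \<otimes>\<^bsub>R Quot I\<^esub> f [^]\<^bsub>R Quot I\<^esub> n) \<otimes>\<^bsub>R Quot I\<^esub> f [^]\<^bsub>R Quot I\<^esub> n"
    unfolding fn by (rule rcos_regular[OF is_cring nat_pow_closed[OF r(1), of n] w])
  have "f [^]\<^bsub>R Quot I\<^esub> n \<in> carrier (R Quot I)"
    using monoid.nat_pow_closed[OF ring.is_monoid[OF cring.axioms(1)[OF quot]] f] .
  moreover have "I +> w \<in> carrier (R Quot I)"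
    using ring_hom_closed[OF rcos_ring_hom w(1)] .
  ultimately have "projective_module (R Quot I)
      (ideal_module (R Quot I) (PIdl\<^bsub>R Quot I\<^esub> (f [^]\<^bsub>R Quot I\<^esub> n)))"
    using regular_fn by (rule cring.projective_PIdl_regular[OF quot])
  then show "\<exists>n::nat\<ge>1. projective_module (R Quot I)
      (ideal_module (R Quot I) (PIdl\<^bsub>R Quot I\<^esub> (f [^]\<^bsub>R Quot I\<^esub> n)))"
    using n by blast
qed

lemma (in cring) GPP_ring_Quot_INTER_maximalideal_pow:
  assumes "finite S" and maximal: "\<And>i. i \<in> S \<Longrightarrow> maximalideal (P i) R"
  shows "GPP_ring (R Quot (carrier R \<inter> (\<Inter>i\<in>S. ideal_pow R (P i) (c i))))"
proof -
  have ideal_pow_P: "ideal (ideal_pow R (P i) (c i)) R" if "i \<in> S" for i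
    using maximal[OF that] by (intro ideal_ideal_pow maximalideal.axioms(1))
  interpret I: ideal "carrier R \<inter> (\<Inter>i\<in>S. ideal_pow R (P i) (c i))" R
    using ideal_pow_P by (rule ideal_carrier_Int_INTER)
  show ?thesis
  proof (rule I.GPP_ring_Quot[OF is_cring])
    fix r assume r: "r \<in> carrier R"
    define n where "n = (\<Sum>i\<in>S. c i) + 1"
    have "c i \<le> n" if "i \<in> S" for i
      using member_le_sum[of i S c] that \<open>finite S\<close> by (simp add: n_def)
    then have regular_i:
        "\<exists>w\<in>carrier R. r [^] n \<otimes> (\<one> \<ominus> r [^] n \<otimes> w) \<in> ideal_pow R (P i) (c i)"
      if "i \<in> S" for i
      using nat_pow_regular_mod_maximalideal_pow[OF maximal r] that by blast
    have "\<exists>w\<in>carrier R.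
        r [^] n \<otimes> (\<one> \<ominus> r [^] n \<otimes> w) \<in> carrier R \<inter> (\<Inter>i\<in>S. ideal_pow R (P i) (c i))"
      using regular_mod_INTER[OF \<open>finite S\<close> ideal_pow_P nat_pow_closed[OF r, of n] regular_i] .
    moreover have "n \<ge> 1"
      by (simp add: n_def)
    ultimately show "\<exists>n::nat\<ge>1. \<exists>w\<in>carrier R.
        r [^] n \<otimes> (\<one> \<ominus> r [^] n \<otimes> w) \<in> carrier R \<inter> (\<Inter>i\<in>S. ideal_pow R (P i) (c i))"
      by blast
  qed
qed

theorem proposition2p6:
  fixes R :: "('a, 'b) ring_scheme"
    and m :: "nat \<Rightarrow> 'a set" and c :: "nat \<Rightarrow> nat" and d :: nat
  assumes "cring R"
    and "\<And>i. i < d \<Longrightarrow> maximalideal (m i) R"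
    and "inj_on m {..<d}"
    and "\<And>i. i < d \<Longrightarrow> c i \<ge> 1"
  shows "GPP_ring (R Quot (carrier R \<inter> (\<Inter>i<d. ideal_pow R (m i) (c i))))"
  by (rule cring.GPP_ring_Quot_INTER_maximalideal_pow[OF assms(1)]) (simp_all add: assms(2))

end
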